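(* Let $\lambda\ge1$ and let $f_\lambda$ be the number of free subgroups of index $6\lambda$ in $PSL_2(\mathbb Z)$. Then: (1) $f_\lambda\equiv-1\pmod 3$ if and only if the ternary expansion of $\lambda$ lies in $\{0,2\}^*1$; (2) $f_\lambda\equiv1\pmod 3$ if and only if the ternary expansion of $\lambda$ lies in $\{0,2\}^*10 0^*\cup\{0,2\}^*12 2^*$; (3) for all other $\lambda\ge1$, $f_\lambda\equiv0\pmod3$.
   Context: Equivalently, $F(z)=1+\sum_{\lambda\ge1}f_\lambda z^\lambda$ is the unique formal power series with $F(0)=1$ satisfying $zF^2(z)-(1-4z)F(z)+6z^2F'(z)+1=0$. Word notation: ternary expansions are written as strings of digits $0,1,2$ with the most significant digit on the left, and leading $0$'s may be added or removed at will; for a set $S$ of letters, $S^*$ is the set of all finite words over $S$; $a^*=\{\text{empty word},a,aa,\dots\}$; juxtaposition of sets of words denotes the set of concatenations. Thus e.g. $\{0,2\}^*100^*$ is the set of strings consisting of an arbitrary word in $0,2$, followed by $1$, followed by one or more $0$'s. *)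

theory Defs
  imports "HOL-Computational_Algebra.Formal_Power_Series" "HOL-Number_Theory.Cong"
begin

text \<open>The generating function F(z) = 1 + sum f_lambda z^lambda of the numbers f_lambda of
  free subgroups of index 6 lambda in PSL_2(Z): the unique formal power series with F(0) = 1
  satisfying z F^2 - (1 - 4z) F + 6 z^2 F' + 1 = 0.\<close>
definition free_gf :: "int fps" where
  "free_gf = (THE F. fps_nth F 0 = 1 \<and>
      fps_X * F ^ 2 - (1 - 4 * fps_X) * F + 6 * fps_X ^ 2 * fps_deriv F + 1 = 0)"

definition free_count :: "nat \<Rightarrow> int" where
  "free_count n = fps_nth free_gf n"

fun ternary :: "nat \<Rightarrow> nat list" where
  "ternary n = (if n = 0 then [] else ternary (n div 3) @ [n mod 3])"

end

theory Submission
  imports Defs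
begin

text \<open>Modulo 3 the equation defining \<open>F\<close> becomes \<open>z F\<^sup>2 - (1 - z) F + 1 = 0\<close>, which still
  determines \<open>F\<close> from \<open>F(0) = 1\<close>, and whose discriminant is \<open>1 + z\<^sup>2\<close>.
  Let \<open>B = \<Prod>\<^sub>k (1 + z\<^bsup>3^k\<^esup>)\<close> be the series of the numbers with ternary digits \<open>0, 1\<close>,
  so \<open>B(z) = (1 + z) B(z\<^sup>3)\<close>. Since \<open>(1 + z)\<^sup>3 \<equiv> 1 + z\<^sup>3\<close>, the series \<open>K = (1 + z) B\<^sup>2\<close>
  satisfies \<open>K(z\<^sup>3) \<equiv> K\<close>, hence \<open>K \<equiv> 1\<close> and \<open>A = (1 + z) B\<close> is a square root of \<open>1 + z\<close>.
  Then \<open>H = (A(z\<^sup>2) - 1 + z) / z\<close> solves the reduced equation, so \<open>f\<^sub>\<lambda>\<close> is congruent to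
  \<open>0\<close> for even \<open>\<lambda>\<close> and to \<open>b\<^sub>m + b\<^bsub>m-1\<^esub>\<close> for \<open>\<lambda> = 2m - 1\<close>, where \<open>b\<close> are the coefficients
  of \<open>B\<close>. Doubling a number with ternary digits \<open>0, 1\<close> produces no carries, which
  translates these indicators into the ternary patterns of \<open>\<lambda>\<close>.\<close>

unbundle fps_syntax

section \<open>Divisibility of power series by constants\<close>

lemma fps_const_dvd_iff:
  fixes P :: "'a::comm_semiring_1 fps"
  shows "fps_const c dvd P \<longleftrightarrow> (\<forall>n. c dvd P $ n)"
proof
  assume "fps_const c dvd P"
  then show "\<forall>n. c dvd P $ n" by (auto elim!: dvdE)
next
  assume divisible: "\<forall>n. c dvd P $ n"
  have "P $ n = c * (SOME q. P $ n = c * q)" for n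
  proof -
    from divisible obtain q where "P $ n = c * q" by (auto elim: dvdE)
    then show ?thesis by (rule someI)
  qed
  then have "P = fps_const c * Abs_fps (\<lambda>n. SOME q. P $ n = c * q)"
    by (intro fps_ext) simp
  then show "fps_const c dvd P" by (rule dvdI)
qed

lemma fps_const_dvd_fps_X_mult_iff:
  fixes P :: "'a::comm_semiring_1 fps"
  shows "fps_const c dvd fps_X * P \<longleftrightarrow> fps_const c dvd P"
  unfolding fps_const_dvd_iff
proof
  assume "\<forall>n. c dvd (fps_X * P) $ n"
  then have "c dvd (fps_X * P) $ Suc n" for n by blast
  then show "\<forall>n. c dvd P $ n" by simp
qed simp

lemma fps_const_dvd_compose:
  fixes P :: "'a::comm_ring_1 fps"
  assumes "fps_const c dvd P"
  shows "fps_const c dvd (P oo Q)"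
proof -
  from assms obtain R where "P = fps_const c * R" by (rule dvdE)
  then have "P oo Q = fps_const c * (R oo Q)" by (simp add: fps_const_mult_apply_left)
  then show ?thesis by simp
qed

lemma fps_compose_X_power_nth:
  fixes a :: "'a::comm_ring_1 fps"
  assumes "0 < k"
  shows "(a oo fps_X ^ k) $ n = (if k dvd n then a $ (n div k) else 0)"
proof -
  have "(a oo fps_X ^ k) $ n = (\<Sum>i=0..n. if n = k * i then a $ i else 0)"
    by (simp add: fps_compose_nth power_mult[symmetric]) (rule sum.cong, auto)
  also have "\<dots> = (\<Sum>i\<in>{0..n} \<inter> {i. n = k * i}. a $ i)"
    by (simp add: sum.inter_restrict)
  also have "{0..n} \<inter> {i. n = k * i} = (if k dvd n then {n div k} else {})"
    using assms by (auto simp: div_le_dividend)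
  finally show ?thesis by simp
qed

text \<open>Each coefficient of positive index is congruent to one of smaller positive index,
  or to \<open>0\<close>.\<close>
lemma fps_const_dvd_minus_const_if_compose_X_power:
  fixes K :: "'a::comm_ring_1 fps"
  assumes "1 < k" and "fps_const c dvd (K - (K oo fps_X ^ k))"
  shows "fps_const c dvd (K - fps_const (K $ 0))"
  unfolding fps_const_dvd_iff
proof
  have step: "c dvd (K $ n - (if k dvd n then K $ (n div k) else 0))" for n
  proof -
    have "c dvd (K - (K oo fps_X ^ k)) $ n"
      using assms(2) fps_const_dvd_iff by blast
    then show ?thesis using assms(1) by (simp add: fps_compose_X_power_nth)
  qed
  fix n
  show "c dvd (K - fps_const (K $ 0)) $ n"
  proof (induction n rule: less_induct)
    case (less n)
    show ?case
    proof (cases "n = 0 \<or> \<not> k dvd n")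
      case True
      then show ?thesis using step[of n] by auto
    next
      case False
      then have "n div k < n" "n div k \<noteq> 0" using assms by auto
      then have "c dvd K $ (n div k)" using less[of "n div k"] by simp
      moreover have "c dvd K $ n - K $ (n div k)" using step[of n] False by simp
      ultimately have "c dvd (K $ n - K $ (n div k)) + K $ (n div k)" by (rule dvd_add[rotated])
      then show ?thesis using False by simp
    qed
  qed
qed

section \<open>The Riccati equation\<close>

definition riccati :: "'a::comm_ring_1 \<Rightarrow> 'a \<Rightarrow> 'a fps \<Rightarrow> 'a fps" where
  "riccati a b F =
     fps_X * F\<^sup>2 - (1 - fps_const a * fps_X) * F + fps_const b * fps_X\<^sup>2 * fps_deriv F + 1"

lemma riccati_nth_0: "riccati a b F $ 0 = 1 - F $ 0"
  by (simp add: riccati_def)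

lemma riccati_nth_Suc:
  "riccati a b F $ Suc m
     = (\<Sum>i=0..m. F $ i * F $ (m - i)) - F $ Suc m + (a + b * of_nat m) * F $ m"
proof -
  have square: "(fps_X * F\<^sup>2) $ Suc m = (\<Sum>i=0..m. F $ i * F $ (m - i))"
    by (simp only: power2_eq_square fps_X_mult_nth) (simp add: fps_mult_nth)
  have linear: "((1 - fps_const a * fps_X) * F) $ Suc m = F $ Suc m - a * F $ m"
    by (simp add: left_diff_distrib mult.assoc)
  have deriv: "(fps_const b * fps_X\<^sup>2 * fps_deriv F) $ Suc m = b * of_nat m * F $ m"
    by (cases m) (simp_all add: mult.assoc fps_X_power_mult_nth)
  show ?thesis
    unfolding riccati_def fps_add_nth fps_sub_nth square linear deriv
    by (simp add: algebra_simps)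
qed

lemma riccati_recurrence_cong:
  fixes F :: "int fps"
  assumes "fps_const p dvd riccati a b F"
  shows "[F $ Suc m = (\<Sum>i=0..m. F $ i * F $ (m - i)) + (a + b * int m) * F $ m] (mod p)"
proof -
  have "p dvd riccati a b F $ Suc m" using assms fps_const_dvd_iff by blast
  moreover have "riccati a b F $ Suc m
      = ((\<Sum>i=0..m. F $ i * F $ (m - i)) + (a + b * int m) * F $ m) - F $ Suc m"
    by (simp add: riccati_nth_Suc)
  ultimately show ?thesis by (simp add: cong_iff_dvd_diff dvd_diff_commute)
qed

text \<open>For \<open>p = 0\<close> this is uniqueness of the solution with a given constant term.\<close>
lemma riccati_coeffs_cong:
  fixes F G :: "int fps"
  assumes F: "fps_const p dvd riccati a b F" and G: "fps_const p dvd riccati a b G"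
    and "[F $ 0 = G $ 0] (mod p)"
  shows "[F $ n = G $ n] (mod p)"
proof (induction n rule: less_induct)
  case (less n)
  show ?case
  proof (cases n)
    case 0
    then show ?thesis using assms(3) by simp
  next
    case (Suc m)
    let ?rec = "\<lambda>H :: int fps. (\<Sum>i=0..m. H $ i * H $ (m - i)) + (a + b * int m) * H $ m"
    have "[F $ Suc m = ?rec F] (mod p)"
      using F by (rule riccati_recurrence_cong)
    also have "[?rec F = ?rec G] (mod p)"
      using less Suc by (intro cong_add cong_sum cong_mult cong_refl) auto
    also have "[?rec G = G $ Suc m] (mod p)"
      using G by (rule riccati_recurrence_cong[THEN cong_sym])
    finally show ?thesis using Suc by simp
  qed
qed

fun free_seq :: "nat \<Rightarrow> int" where
  "free_seq 0 = 1"
| "free_seq (Suc m) = (\<Sum>i=0..m. free_seq i * free_seq (m - i)) + (4 + 6 * int m) * free_seq m"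

lemma riccati_free_seq: "riccati 4 6 (Abs_fps free_seq) = 0"
proof (rule fps_ext)
  fix n
  show "riccati 4 6 (Abs_fps free_seq) $ n = 0 $ n"
    by (cases n) (simp_all add: riccati_nth_0 riccati_nth_Suc)
qed

lemma free_gf_riccati: "free_gf $ 0 = 1" "riccati 4 6 free_gf = 0"
proof -
  have riccati_eq: "fps_X * F ^ 2 - (1 - 4 * fps_X) * F + 6 * fps_X ^ 2 * fps_deriv F + 1
      = riccati 4 6 F" for F :: "int fps"
    by (simp add: riccati_def numeral_fps_const)
  have unique: "F = G"
    if "F $ 0 = 1 \<and> riccati 4 6 F = 0" "G $ 0 = 1 \<and> riccati 4 6 G = 0" for F G :: "int fps"
    using riccati_coeffs_cong[of 0 4 6 F G] that by (intro fps_ext) simp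
  have "\<exists>!F :: int fps. F $ 0 = 1 \<and> riccati 4 6 F = 0"
    using riccati_free_seq unique by (intro ex1I[of _ "Abs_fps free_seq"]) auto
  then have "free_gf $ 0 = 1 \<and> riccati 4 6 free_gf = 0"
    unfolding free_gf_def riccati_eq by (rule theI')
  then show "free_gf $ 0 = 1" "riccati 4 6 free_gf = 0" by simp_all
qed

lemma free_gf_riccati_mod3: "fps_const 3 dvd riccati 1 0 free_gf"
proof -
  have "riccati 1 0 F = riccati 4 6 F - fps_const 3 * (fps_X * F + 2 * fps_X\<^sup>2 * fps_deriv F)"
    for F :: "int fps"
    by (simp add: riccati_def numeral_fps_const[symmetric]) (simp add: algebra_simps)
  then show ?thesis using free_gf_riccati(2) by simp
qed

section \<open>Ternary digit patterns\<close>

lemma ternary_0 [simp]: "ternary 0 = []"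
  by simp

lemma ternary_pos: "0 < n \<Longrightarrow> ternary n = ternary (n div 3) @ [n mod 3]"
  by simp

declare ternary.simps [simp del]

lemma base3_cases:
  fixes n :: nat
  obtains (zero) q where "n = 3 * q" | (one) q where "n = 3 * q + 1" | (two) q where "n = 3 * q + 2"
proof -
  have n: "n = 3 * (n div 3) + n mod 3" by simp
  have "n mod 3 = 0 \<or> n mod 3 = 1 \<or> n mod 3 = 2" by presburger
  then show thesis
  proof (elim disjE)
    assume "n mod 3 = 0"
    with n show thesis using zero by simp
  next
    assume "n mod 3 = 1"
    with n have "n = 3 * (n div 3) + 1" by simp
    then show thesis by (rule one)
  next
    assume "n mod 3 = 2"
    with n have "n = 3 * (n div 3) + 2" by simp
    then show thesis by (rule two)
  qed
qed

lemma ternary_eq_snoc_iff: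
  "r < 3 \<Longrightarrow> ternary (3 * q + r) = xs @ [d] \<longleftrightarrow> (q \<noteq> 0 \<or> r \<noteq> 0) \<and> d = r \<and> ternary q = xs"
  by (cases "q = 0 \<and> r = 0") (auto simp: ternary_pos)

lemma set_ternary_subset_base3:
  assumes "0 \<in> S" "r < 3"
  shows "set (ternary (3 * q + r)) \<subseteq> S \<longleftrightarrow> r \<in> S \<and> set (ternary q) \<subseteq> S"
  using assms by (cases "q = 0 \<and> r = 0") (auto simp: ternary_pos)

lemma even_if_set_ternary_subset_02: "set (ternary n) \<subseteq> {0, 2} \<Longrightarrow> even n"
proof (induction n rule: less_induct)
  case (less n)
  show ?case
  proof (cases n rule: base3_cases)
    case (zero q)
    then show ?thesis
      using less set_ternary_subset_base3[of "{0, 2}" 0 q] by (cases "q = 0") auto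
  next
    case (one q)
    then show ?thesis using less.prems set_ternary_subset_base3[of "{0, 2}" 1 q] by simp
  next
    case (two q)
    then show ?thesis using less set_ternary_subset_base3[of "{0, 2}" 2 q] by simp
  qed
qed

definition ternary_02_1_tail :: "nat \<Rightarrow> nat \<Rightarrow> bool" where
  "ternary_02_1_tail d n \<longleftrightarrow> (\<exists>w k. set w \<subseteq> {0, 2} \<and> ternary n = w @ [1] @ replicate k d)"

lemma ternary_02_1_tail_base3:
  assumes "r < 3"
  shows "ternary_02_1_tail d (3 * q + r) \<longleftrightarrow>
           (r = 1 \<and> set (ternary q) \<subseteq> {0, 2}) \<or> (r = d \<and> ternary_02_1_tail d q)"
proof
  assume "ternary_02_1_tail d (3 * q + r)"
  then obtain w k where w: "set w \<subseteq> {0, 2}" and tern: "ternary (3 * q + r) = w @ [1] @ replicate k d"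
    unfolding ternary_02_1_tail_def by blast
  show "(r = 1 \<and> set (ternary q) \<subseteq> {0, 2}) \<or> (r = d \<and> ternary_02_1_tail d q)"
  proof (cases k)
    case 0
    then show ?thesis using tern w assms by (simp add: ternary_eq_snoc_iff)
  next
    case (Suc k')
    then have "ternary (3 * q + r) = (w @ [1] @ replicate k' d) @ [d]"
      using tern by (simp add: replicate_append_same)
    then have "r = d" "ternary q = w @ [1] @ replicate k' d"
      using ternary_eq_snoc_iff[OF assms, of q "w @ [1] @ replicate k' d" d] by auto
    then show ?thesis using w unfolding ternary_02_1_tail_def by blast
  qed
next
  assume "(r = 1 \<and> set (ternary q) \<subseteq> {0, 2}) \<or> (r = d \<and> ternary_02_1_tail d q)"
  then show "ternary_02_1_tail d (3 * q + r)"
  proof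
    assume "r = 1 \<and> set (ternary q) \<subseteq> {0, 2}"
    moreover from this have "ternary (3 * q + r) = ternary q @ [1]"
      using ternary_eq_snoc_iff[OF assms, of q "ternary q" 1] by simp
    ultimately show ?thesis
      unfolding ternary_02_1_tail_def by (metis append.right_neutral replicate_0)
  next
    assume "r = d \<and> ternary_02_1_tail d q"
    then obtain w k where "r = d" "set w \<subseteq> {0, 2}" and tern: "ternary q = w @ [1] @ replicate k d"
      unfolding ternary_02_1_tail_def by blast
    moreover have "q \<noteq> 0" using tern by (cases "q = 0") auto
    ultimately have "ternary (3 * q + r) = (w @ [1] @ replicate k d) @ [d]"
      using ternary_eq_snoc_iff[OF assms, of q "w @ [1] @ replicate k d" d] by simp
    then have "ternary (3 * q + r) = w @ [1] @ replicate (Suc k) d"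
      by (simp add: replicate_append_same)
    with \<open>set w \<subseteq> {0, 2}\<close> show ?thesis
      unfolding ternary_02_1_tail_def by blast
  qed
qed

lemma odd_if_ternary_02_1_tail: "even d \<Longrightarrow> ternary_02_1_tail d n \<Longrightarrow> odd n"
proof (induction n rule: less_induct)
  case (less n)
  define q r where "q = n div 3" and "r = n mod 3"
  then have n: "n = 3 * q + r" and "r < 3" by simp_all
  then have "(r = 1 \<and> set (ternary q) \<subseteq> {0, 2}) \<or> (r = d \<and> ternary_02_1_tail d q)"
    using less.prems(2) ternary_02_1_tail_base3 by simp
  then show ?case
  proof
    assume "r = 1 \<and> set (ternary q) \<subseteq> {0, 2}"
    then show ?thesis using n even_if_set_ternary_subset_02 by auto
  next
    assume r: "r = d \<and> ternary_02_1_tail d q"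
    then have "q \<noteq> 0" by (cases "q = 0") (auto simp: ternary_02_1_tail_def)
    then have "odd q" using less r n by simp
    then show ?thesis using n r less.prems(1) by simp
  qed
qed

lemma set_ternary_double_subset_02_iff:
  "set (ternary (2 * q)) \<subseteq> {0, 2} \<longleftrightarrow> set (ternary q) \<subseteq> {0, 1}"
proof (induction q rule: less_induct)
  case (less q)
  show ?case
  proof (cases q rule: base3_cases)
    case (zero s)
    then have "s < q \<or> q = 0" and double: "2 * q = 3 * (2 * s) + 0" by auto
    then show ?thesis
      unfolding double using zero less[of s] set_ternary_subset_base3[of "{0, 2}" 0 "2 * s"]
        set_ternary_subset_base3[of "{0, 1}" 0 s] by auto
  next
    case (one s)
    then have double: "2 * q = 3 * (2 * s) + 2" by simp
    show ?thesis
      unfolding double using one less[of s] set_ternary_subset_base3[of "{0, 2}" 2 "2 * s"]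
        set_ternary_subset_base3[of "{0, 1}" 1 s] by simp
  next
    case (two s)
    then have double: "2 * q = 3 * (2 * s + 1) + 1" by simp
    show ?thesis
      unfolding double using two set_ternary_subset_base3[of "{0, 2}" 1 "2 * s + 1"]
        set_ternary_subset_base3[of "{0, 1}" 2 s] by simp
  qed
qed

lemma ternary_02_1_tail_0_double_Suc_iff:
  "ternary_02_1_tail 0 (2 * q + 1) \<longleftrightarrow> set (ternary q) \<subseteq> {0, 1}"
proof (induction q rule: less_induct)
  case (less q)
  show ?case
  proof (cases q rule: base3_cases)
    case (zero s)
    then have double: "2 * q + 1 = 3 * (2 * s) + 1" by simp
    show ?thesis
      unfolding double using zero ternary_02_1_tail_base3[of 1 0 "2 * s"]
        set_ternary_double_subset_02_iff[of s] set_ternary_subset_base3[of "{0, 1}" 0 s] by simp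
  next
    case (one s)
    then have double: "2 * q + 1 = 3 * (2 * s + 1) + 0" by simp
    show ?thesis
      unfolding double using one less[of s] ternary_02_1_tail_base3[of 0 0 "2 * s + 1"]
        set_ternary_subset_base3[of "{0, 1}" 1 s] by simp
  next
    case (two s)
    then have double: "2 * q + 1 = 3 * (2 * s + 1) + 2" by simp
    show ?thesis
      unfolding double using two ternary_02_1_tail_base3[of 2 0 "2 * s + 1"]
        set_ternary_subset_base3[of "{0, 1}" 2 s] by simp
  qed
qed

lemma ternary_02_1_tail_2_double_pred_iff:
  "1 \<le> q \<Longrightarrow> ternary_02_1_tail 2 (2 * q - 1) \<longleftrightarrow> set (ternary q) \<subseteq> {0, 1}"
proof (induction q rule: less_induct)
  case (less q)
  show ?case
  proof (cases q rule: base3_cases)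
    case (zero s)
    then have "1 \<le> s" "s < q" and double: "2 * q - 1 = 3 * (2 * s - 1) + 2"
      using less.prems by auto
    then show ?thesis
      unfolding double using zero less.IH[of s] ternary_02_1_tail_base3[of 2 2 "2 * s - 1"]
        set_ternary_subset_base3[of "{0, 1}" 0 s] by simp
  next
    case (one s)
    then have double: "2 * q - 1 = 3 * (2 * s) + 1" by simp
    show ?thesis
      unfolding double using one ternary_02_1_tail_base3[of 1 2 "2 * s"]
        set_ternary_double_subset_02_iff[of s] set_ternary_subset_base3[of "{0, 1}" 1 s] by simp
  next
    case (two s)
    then have double: "2 * q - 1 = 3 * (2 * s + 1) + 0" by simp
    show ?thesis
      unfolding double using two ternary_02_1_tail_base3[of 0 2 "2 * s + 1"]
        set_ternary_subset_base3[of "{0, 1}" 2 s] by simp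
  qed
qed

definition ternary_in_02_1 :: "nat \<Rightarrow> bool" where
  "ternary_in_02_1 n \<longleftrightarrow> (\<exists>w. set w \<subseteq> {0, 2} \<and> ternary n = w @ [1])"

definition ternary_in_02_100_122 :: "nat \<Rightarrow> bool" where
  "ternary_in_02_100_122 n \<longleftrightarrow> (\<exists>w k. set w \<subseteq> {0, 2} \<and>
     (ternary n = w @ [1, 0] @ replicate k 0 \<or> ternary n = w @ [1, 2] @ replicate k 2))"

lemma ternary_in_02_1_base3:
  assumes "r < 3"
  shows "ternary_in_02_1 (3 * q + r) \<longleftrightarrow> r = 1 \<and> set (ternary q) \<subseteq> {0, 2}"
  unfolding ternary_in_02_1_def ternary_eq_snoc_iff[OF assms] by auto

lemma ternary_in_02_100_122_base3:
  assumes "r < 3"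
  shows "ternary_in_02_100_122 (3 * q + r) \<longleftrightarrow>
           (r = 0 \<and> ternary_02_1_tail 0 q) \<or> (r = 2 \<and> ternary_02_1_tail 2 q)"
proof -
  have "ternary (3 * q + r) = w @ [1, d] @ replicate k d \<longleftrightarrow>
          d = r \<and> ternary q = w @ [1] @ replicate k d" for w k d
  proof -
    have snoc: "w @ [1, d] @ replicate k d = (w @ [1] @ replicate k d) @ [d]"
      by (simp add: replicate_append_same)
    have "q \<noteq> 0" if "ternary q = w @ [1] @ replicate k d"
      using that by (cases "q = 0") auto
    then show ?thesis unfolding snoc ternary_eq_snoc_iff[OF assms] by auto
  qed
  then show ?thesis
    unfolding ternary_in_02_100_122_def ternary_02_1_tail_def by auto
qed

lemma ternary_in_02_1_imp_not_02_100_122: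
  assumes "ternary_in_02_1 n"
  shows "\<not> ternary_in_02_100_122 n"
proof -
  define q r where "q = n div 3" and "r = n mod 3"
  then have n: "n = 3 * q + r" and r: "r < 3" by simp_all
  show ?thesis
    using assms unfolding n ternary_in_02_1_base3[OF r] ternary_in_02_100_122_base3[OF r] by simp
qed

lemma odd_if_ternary_in_02_1_or_02_100_122:
  assumes "ternary_in_02_1 n \<or> ternary_in_02_100_122 n"
  shows "odd n"
proof -
  define q r where "q = n div 3" and "r = n mod 3"
  then have n: "n = 3 * q + r" and r: "r < 3" by simp_all
  then have "(r = 1 \<and> set (ternary q) \<subseteq> {0, 2}) \<or>
      (r = 0 \<and> ternary_02_1_tail 0 q) \<or> (r = 2 \<and> ternary_02_1_tail 2 q)"
    using assms ternary_in_02_1_base3[OF r, of q] ternary_in_02_100_122_base3[OF r, of q] by auto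
  then show ?thesis
    using n even_if_set_ternary_subset_02[of q] odd_if_ternary_02_1_tail[of 0 q]
      odd_if_ternary_02_1_tail[of 2 q] by auto
qed

lemma digits_01_indicators_classify:
  assumes "1 \<le> m"
  shows "of_bool (set (ternary m) \<subseteq> {0, 1}) + of_bool (set (ternary (m - 1)) \<subseteq> {0, 1})
       = (if ternary_in_02_1 (2 * m - 1) then 2
          else if ternary_in_02_100_122 (2 * m - 1) then 1 else 0 :: int)"
proof (cases m rule: base3_cases)
  case (zero q)
  then have "1 \<le> q" and pred: "m - 1 = 3 * (q - 1) + 2" and odd: "2 * m - 1 = 3 * (2 * q - 1) + 2"
    using assms by auto
  show ?thesis
    unfolding pred odd using zero \<open>1 \<le> q\<close>
      set_ternary_subset_base3[of "{0, 1}" 0 q] set_ternary_subset_base3[of "{0, 1}" 2 "q - 1"]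
      ternary_in_02_1_base3[of 2 "2 * q - 1"] ternary_in_02_100_122_base3[of 2 "2 * q - 1"]
      ternary_02_1_tail_2_double_pred_iff[of q]
    by simp
next
  case (one q)
  then have pred: "m - 1 = 3 * q + 0" and odd: "2 * m - 1 = 3 * (2 * q) + 1"
    by auto
  show ?thesis
    unfolding pred odd using one
      set_ternary_subset_base3[of "{0, 1}" 1 q] set_ternary_subset_base3[of "{0, 1}" 0 q]
      ternary_in_02_1_base3[of 1 "2 * q"] ternary_in_02_100_122_base3[of 1 "2 * q"]
      set_ternary_double_subset_02_iff[of q]
    by simp
next
  case (two q)
  then have pred: "m - 1 = 3 * q + 1" and odd: "2 * m - 1 = 3 * (2 * q + 1) + 0"
    by auto
  show ?thesis
    unfolding pred odd using two
      set_ternary_subset_base3[of "{0, 1}" 2 q] set_ternary_subset_base3[of "{0, 1}" 1 q]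
      ternary_in_02_1_base3[of 0 "2 * q + 1"] ternary_in_02_100_122_base3[of 0 "2 * q + 1"]
      ternary_02_1_tail_0_double_Suc_iff[of q]
    by simp
qed

section \<open>A square root of \<open>1 + z\<close> modulo 3\<close>

text \<open>The product \<open>\<Prod>\<^sub>k (1 + z\<^bsup>3^k\<^esup>)\<close>.\<close>
definition digits_01_gf :: "int fps" where
  "digits_01_gf = Abs_fps (\<lambda>n. of_bool (set (ternary n) \<subseteq> {0, 1}))"

lemma digits_01_gf_functional_eq: "digits_01_gf = (1 + fps_X) * (digits_01_gf oo fps_X ^ 3)"
proof (rule fps_ext)
  fix n
  let ?b = "\<lambda>n. of_bool (set (ternary n) \<subseteq> {0, 1}) :: int"
  have compose: "(digits_01_gf oo fps_X ^ 3) $ n = (if 3 dvd n then ?b (n div 3) else 0)" for n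
    by (simp add: fps_compose_X_power_nth digits_01_gf_def)
  have "((1 + fps_X) * (digits_01_gf oo fps_X ^ 3)) $ n
      = (digits_01_gf oo fps_X ^ 3) $ n + (if n = 0 then 0 else (digits_01_gf oo fps_X ^ 3) $ (n - 1))"
    by (simp add: distrib_right)
  also have "\<dots> = ?b n"
  proof (cases n rule: base3_cases)
    case (zero q)
    then have "?b n = ?b q" using set_ternary_subset_base3[of "{0, 1}" 0 q] by simp
    moreover have "3 dvd n" "n div 3 = q" using zero by simp_all
    moreover have "\<not> 3 dvd n - 1" if "n \<noteq> 0" using zero that by presburger
    ultimately show ?thesis unfolding compose by (cases "n = 0") simp_all
  next
    case (one q)
    then have "?b n = ?b q" using set_ternary_subset_base3[of "{0, 1}" 1 q] by simp
    moreover have "\<not> 3 dvd n" "n \<noteq> 0" "3 dvd n - 1" "(n - 1) div 3 = q" using one by presburger+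
    ultimately show ?thesis unfolding compose by simp
  next
    case (two q)
    then have "?b n = 0" using set_ternary_subset_base3[of "{0, 1}" 2 q] by simp
    moreover have "\<not> 3 dvd n" "\<not> 3 dvd n - 1" using two by presburger+
    ultimately show ?thesis unfolding compose by simp
  qed
  finally have "((1 + fps_X) * (digits_01_gf oo fps_X ^ 3)) $ n = ?b n" .
  moreover have "digits_01_gf $ n = ?b n"
    by (simp add: digits_01_gf_def)
  ultimately show "digits_01_gf $ n = ((1 + fps_X) * (digits_01_gf oo fps_X ^ 3)) $ n"
    by (simp only:)
qed

lemma one_plus_X_mult_digits_01_gf_square_mod3: "fps_const 3 dvd ((1 + fps_X) * digits_01_gf\<^sup>2 - 1)"
proof -
  define B3 where "B3 = digits_01_gf oo fps_X ^ 3"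
  define K where "K = (1 + fps_X) * digits_01_gf\<^sup>2"
  have B: "digits_01_gf = (1 + fps_X) * B3"
    unfolding B3_def by (rule digits_01_gf_functional_eq)
  have K_compose: "K oo fps_X ^ 3 = (1 + fps_X ^ 3) * B3\<^sup>2"
    by (simp add: K_def B3_def fps_compose_mult_distrib fps_compose_add_distrib fps_compose_power)
  have K: "K = (1 + fps_X) ^ 3 * B3\<^sup>2"
    unfolding K_def B by (simp add: power_mult_distrib power3_eq_cube power2_eq_square ac_simps)
  have cube: "(1 + fps_X) ^ 3 - (1 + fps_X ^ 3) = fps_const 3 * (fps_X + fps_X\<^sup>2 :: int fps)"
    by (simp add: numeral_fps_const[symmetric] algebra_simps power3_eq_cube power2_eq_square)
  have "K - (K oo fps_X ^ 3) = ((1 + fps_X) ^ 3 - (1 + fps_X ^ 3)) * B3\<^sup>2"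
    unfolding K_compose by (subst K) (simp only: left_diff_distrib)
  also have "\<dots> = fps_const 3 * ((fps_X + fps_X\<^sup>2) * B3\<^sup>2)"
    by (simp only: cube mult.assoc)
  finally have "fps_const 3 dvd (K - (K oo fps_X ^ 3))"
    by (rule dvdI)
  then have "fps_const 3 dvd (K - fps_const (K $ 0))"
    by (rule fps_const_dvd_minus_const_if_compose_X_power[rotated]) simp
  moreover have "K $ 0 = 1"
    by (simp add: K_def digits_01_gf_def power2_eq_square)
  ultimately show ?thesis by (simp add: K_def)
qed

lemma sqrt_one_plus_X_mod3: "fps_const 3 dvd (((1 + fps_X) * digits_01_gf)\<^sup>2 - (1 + fps_X))"
proof -
  have "((1 + fps_X) * digits_01_gf)\<^sup>2 - (1 + fps_X)
      = (1 + fps_X) * ((1 + fps_X) * digits_01_gf\<^sup>2 - 1)"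
    by (simp add: power2_eq_square algebra_simps)
  then show ?thesis
    using dvd_mult[OF one_plus_X_mult_digits_01_gf_square_mod3, of "1 + fps_X"] by simp
qed

section \<open>The free subgroup counts modulo 3\<close>

text \<open>Modulo 3 the discriminant \<open>(1 - z)\<^sup>2 - 4 z\<close> of \<open>z H\<^sup>2 - (1 - z) H + 1\<close> is \<open>1 + z\<^sup>2\<close>
  and \<open>1/2 = -1\<close>, so a square root \<open>G\<close> of \<open>1 + z\<^sup>2\<close> yields the root \<open>H = (G - 1 + z) / z\<close>.\<close>
lemma riccati_mod3_of_square_root:
  fixes G :: "int fps"
  assumes "fps_const 3 dvd (G\<^sup>2 - (1 + fps_X\<^sup>2))" and "G $ 0 = 1"
  shows "fps_const 3 dvd riccati 1 0 (fps_shift 1 (G + fps_X))"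
proof -
  define H where "H = fps_shift 1 (G + fps_X)"
  have XH: "fps_X * H = G - 1 + fps_X"
  proof (rule fps_ext)
    fix n
    show "(fps_X * H) $ n = (G - 1 + fps_X) $ n"
      using assms(2) by (cases n) (simp_all add: H_def)
  qed
  have "fps_X * riccati 1 0 H = (fps_X * H)\<^sup>2 - (1 - fps_X) * (fps_X * H) + fps_X"
    by (simp add: riccati_def power2_eq_square algebra_simps)
  also have "\<dots> = (G\<^sup>2 - (1 + fps_X\<^sup>2)) + fps_const 3 * ((fps_X - 1) * G + fps_X\<^sup>2 - fps_X + 1)"
    unfolding XH by (simp add: numeral_fps_const[symmetric] power2_eq_square algebra_simps)
  finally have "fps_const 3 dvd fps_X * riccati 1 0 H"
    using dvd_add[OF assms(1) dvd_triv_left] by simp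
  then show ?thesis
    by (simp add: fps_const_dvd_fps_X_mult_iff H_def)
qed

definition free_gf_mod3 :: "int fps" where
  "free_gf_mod3 = fps_shift 1 ((((1 + fps_X) * digits_01_gf) oo fps_X ^ 2) + fps_X)"

lemma free_count_cong_free_gf_mod3: "[free_count n = free_gf_mod3 $ n] (mod 3)"
proof -
  define G where "G = ((1 + fps_X) * digits_01_gf) oo fps_X ^ 2"
  have "(((1 + fps_X) * digits_01_gf)\<^sup>2 - (1 + fps_X)) oo fps_X ^ 2 = G\<^sup>2 - (1 + fps_X\<^sup>2)"
    by (simp add: G_def fps_compose_sub_distrib fps_compose_add_distrib fps_compose_power)
  then have "fps_const 3 dvd (G\<^sup>2 - (1 + fps_X\<^sup>2))"
    using fps_const_dvd_compose[OF sqrt_one_plus_X_mod3] by metis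
  moreover have "G $ 0 = 1"
    by (simp add: G_def digits_01_gf_def)
  ultimately have "fps_const 3 dvd riccati 1 0 free_gf_mod3"
    unfolding free_gf_mod3_def G_def[symmetric] by (rule riccati_mod3_of_square_root)
  moreover have "free_gf_mod3 $ 0 = 1"
    by (simp add: free_gf_mod3_def fps_compose_X_power_nth)
  ultimately show ?thesis
    unfolding free_count_def
    using riccati_coeffs_cong[OF free_gf_riccati_mod3] free_gf_riccati(1) by simp
qed

lemma free_gf_mod3_nth:
  assumes "1 \<le> n"
  shows "free_gf_mod3 $ n = (if even n then 0
           else of_bool (set (ternary ((n + 1) div 2)) \<subseteq> {0, 1})
              + of_bool (set (ternary ((n + 1) div 2 - 1)) \<subseteq> {0, 1}))"
  using assms
  by (auto simp: free_gf_mod3_def fps_compose_X_power_nth distrib_right digits_01_gf_def)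

lemma free_count_cong_ternary_class:
  assumes "1 \<le> n"
  shows "[free_count n = (if ternary_in_02_1 n then -1
           else if ternary_in_02_100_122 n then 1 else 0)] (mod 3)"
proof (cases "even n")
  case True
  then have "\<not> ternary_in_02_1 n" "\<not> ternary_in_02_100_122 n"
    using odd_if_ternary_in_02_1_or_02_100_122 by blast+
  then show ?thesis
    using free_count_cong_free_gf_mod3[of n] free_gf_mod3_nth[OF assms] True by simp
next
  case False
  define m where "m = (n + 1) div 2"
  then have m: "1 \<le> m" "n = 2 * m - 1" using False by presburger+
  have "free_gf_mod3 $ n = (if ternary_in_02_1 n then 2 else if ternary_in_02_100_122 n then 1 else 0)"
    using free_gf_mod3_nth[OF assms] False digits_01_indicators_classify[OF m(1)]
    unfolding m_def[symmetric] m(2)[symmetric] by simp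
  moreover have "[2 = - 1] (mod (3::int))"
    by (simp add: cong_def)
  ultimately show ?thesis
    using free_count_cong_free_gf_mod3[of n] cong_trans by fastforce
qed

theorem corollary17p5:
  fixes lam :: nat
  assumes "lam \<ge> 1"
  shows "([free_count lam = -1] (mod 3) \<longleftrightarrow>
            (\<exists>w. set w \<subseteq> {0, 2} \<and> ternary lam = w @ [1]))
       \<and> ([free_count lam = 1] (mod 3) \<longleftrightarrow>
            (\<exists>w k. set w \<subseteq> {0, 2} \<and>
               (ternary lam = w @ [1, 0] @ replicate k 0 \<or>
                ternary lam = w @ [1, 2] @ replicate k 2)))
       \<and> (\<not> (\<exists>w. set w \<subseteq> {0, 2} \<and> ternary lam = w @ [1]) \<and>
          \<not> (\<exists>w k. set w \<subseteq> {0, 2} \<and>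
               (ternary lam = w @ [1, 0] @ replicate k 0 \<or>
                ternary lam = w @ [1, 2] @ replicate k 2))
          \<longrightarrow> [free_count lam = 0] (mod 3))"
proof -
  let ?class = "if ternary_in_02_1 lam then -1 else if ternary_in_02_100_122 lam then 1 else 0 :: int"
  have class_cong: "[free_count lam = t] (mod 3) \<longleftrightarrow> [?class = t] (mod 3)" for t
    using free_count_cong_ternary_class[OF assms] cong_sym cong_trans by metis
  have distinct: "\<not> [- 1 = 1 :: int] (mod 3)" "\<not> [- 1 = 0 :: int] (mod 3)"
    "\<not> [1 = - 1 :: int] (mod 3)" "\<not> [1 = 0 :: int] (mod 3)"
    "\<not> [0 = - 1 :: int] (mod 3)" "\<not> [0 = 1 :: int] (mod 3)"
    by (simp_all add: cong_def)
  show ?thesis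
    unfolding ternary_in_02_1_def[symmetric] ternary_in_02_100_122_def[symmetric] class_cong
    using ternary_in_02_1_imp_not_02_100_122[of lam] distinct by auto
qed

end
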